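(* Let $W\in\mathbb{R}^{n\times n}$ be positive definite (i.e. $x^TWx>0$ for all nonzero $x\in\mathbb{R}^n$; $W$ need not be symmetric), let $B\in\mathbb{R}^{m\times n}$ with $\operatorname{rank}(B)<m\le n$, and let $$A=\begin{pmatrix} W & B^T\\ -B & 0\end{pmatrix},$$ and let $b\in\mathbb{R}^{n+m}$ lie in the range of $A$. Let $P\in\mathbb{R}^{n\times n}$ be positive definite (not necessarily symmetric) and $$M=\begin{pmatrix} P & B^T\\ -B & 0\end{pmatrix}.$$ Consider the iteration $x^{(k+1)}=x^{(k)}+M^\dagger(b-Ax^{(k)})$, $k=0,1,2,\dots$, where $M^\dagger$ is the Moore–Penrose inverse of $M$. Let $E=BP^{-1}B^T$ and $X=P^{-1}-P^{-1}B^TE^\dagger BP^{-1}$. Then this iteration is convergent if and only if $\gamma(X(P-W))<1$.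
   Context: For a square matrix $T$ with spectrum $\sigma(T)$, $\gamma(T)=\max\{|\lambda|:\lambda\in\sigma(T)\setminus\{1\}\}$ (the pseudo-spectral radius). $E^\dagger$ denotes the Moore–Penrose inverse of $E$. The iteration is called convergent if the sequence $x^{(k)}$ converges (to a solution of $Ax=b$) for every initial guess $x^{(0)}$; equivalently, with iteration matrix $T=I-M^\dagger A$, the limit $\lim_{k\to\infty}T^k$ exists. *)

theory Defs
  imports "Jordan_Normal_Form.Jordan_Normal_Form" "Jordan_Normal_Form.DL_Rank"
begin

definition pos_def_mat :: "nat \<Rightarrow> real mat \<Rightarrow> bool" where
  "pos_def_mat n W \<longleftrightarrow> W \<in> carrier_mat n n \<and>
     (\<forall>x \<in> carrier_vec n. x \<noteq> 0\<^sub>v n \<longrightarrow> x \<bullet> (W *\<^sub>v x) > 0)"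

definition mat_inv :: "nat \<Rightarrow> real mat \<Rightarrow> real mat" where
  "mat_inv n P = (THE Q. Q \<in> carrier_mat n n \<and> P * Q = 1\<^sub>m n \<and> Q * P = 1\<^sub>m n)"

definition moore_penrose :: "real mat \<Rightarrow> real mat" where
  "moore_penrose E = (THE X. X \<in> carrier_mat (dim_col E) (dim_row E) \<and>
      E * X * E = E \<and> X * E * X = X \<and>
      transpose_mat (E * X) = E * X \<and> transpose_mat (X * E) = X * E)"

definition mat_rank :: "real mat \<Rightarrow> nat" where
  "mat_rank B = vec_space.rank (dim_row B) B"

definition pseudo_spectral_radius :: "real mat \<Rightarrow> real" where
  "pseudo_spectral_radius T =
     Max ({cmod l | l. eigenvalue (map_mat complex_of_real T) l \<and> l \<noteq> 1} \<union> {0})"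

fun iter_seq :: "real mat \<Rightarrow> real mat \<Rightarrow> real vec \<Rightarrow> real vec \<Rightarrow> nat \<Rightarrow> real vec" where
  "iter_seq Mp A b x0 0 = x0"
| "iter_seq Mp A b x0 (Suc k) =
     iter_seq Mp A b x0 k + Mp *\<^sub>v (b - A *\<^sub>v iter_seq Mp A b x0 k)"

definition vec_tendsto :: "nat \<Rightarrow> (nat \<Rightarrow> real vec) \<Rightarrow> real vec \<Rightarrow> bool" where
  "vec_tendsto N x y \<longleftrightarrow> (\<forall>i < N. (\<lambda>k. x k $ i) \<longlonglongrightarrow> y $ i)"

definition iteration_convergent :: "nat \<Rightarrow> real mat \<Rightarrow> real mat \<Rightarrow> real vec \<Rightarrow> bool" where
  "iteration_convergent N M A b \<longleftrightarrow>
     (\<forall>x0 \<in> carrier_vec N. \<exists>y \<in> carrier_vec N. A *\<^sub>v y = b \<and>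
        vec_tendsto N (iter_seq (moore_penrose M) A b x0) y)"

end

theory Submission
  imports Defs "Jordan_Normal_Form.Spectral_Radius" "Jordan_Normal_Form.Matrix_Kernel"
begin

text \<open>
  Write Q = M^+ M and S = M^+ (M - A). If A y = b and e = x0 - y, the k-th iterate is
  y + (e - Q e) + S^k Q e. Since ker M is contained in ker A, the middle term solves the
  homogeneous system, so everything is governed by the powers of S: the iteration converges if
  all eigenvalues of S lie in the open unit disc, and convergence forces all eigenvalues other
  than 1 into it.

  M - A vanishes outside its leading n x n block, and the first n columns of M^+ are G = [X; Y]
  with Y = E^+ B P^-1. Hence S = G (P - W) F^T, where F embeds the first block, and S has the same
  nonzero eigenvalues as F^T G (P - W) = X (P - W). Finally X (P - W) u = u forces u^T W u = 0, so
  positive definiteness of W rules out the eigenvalue 1 of X (P - W), and the two directions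
  combine to the criterion on the pseudo-spectral radius.
\<close>

section \<open>Matrix algebra\<close>

(* Variants of the library's associativity and transposition laws that only require matching
   dimensions, so that simp can discharge their side conditions. *)

lemma mult_assoc_dim:
  "dim_col A = dim_row B \<Longrightarrow> dim_col B = dim_row C \<Longrightarrow>
    (A :: 'a :: comm_ring_1 mat) * B * C = A * (B * C)"
  by (rule assoc_mult_mat[of A "dim_row A" "dim_col A" B "dim_col B" C "dim_col C"]) auto

lemma transpose_mult_dim:
  "dim_col A = dim_row B \<Longrightarrow>
    transpose_mat ((A :: 'a :: comm_ring_1 mat) * B) = transpose_mat B * transpose_mat A"
  by (rule transpose_mult[of A "dim_row A" "dim_col A" B "dim_col B"]) auto

lemma mult_mat_vec_assoc_dim:
  "dim_col A = dim_row B \<Longrightarrow> dim_col B = dim_vec v \<Longrightarrow>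
    ((A :: 'a :: comm_ring_1 mat) * B) *\<^sub>v v = A *\<^sub>v (B *\<^sub>v v)"
  by (rule assoc_mult_mat_vec[of A "dim_row A" "dim_col A" B "dim_col B"]) auto

lemma mult_mat_zero_vec: "(A :: 'a :: semiring_0 mat) \<in> carrier_mat r c \<Longrightarrow> A *\<^sub>v 0\<^sub>v c = 0\<^sub>v r"
  by (intro eq_vecI) auto

lemma pow_mat_Suc_left:
  assumes "(S :: 'a :: comm_ring_1 mat) \<in> carrier_mat n n"
  shows "S ^\<^sub>m Suc k = S * S ^\<^sub>m k"
proof (induction k)
  case (Suc k)
  have "S ^\<^sub>m Suc (Suc k) = S * S ^\<^sub>m k * S" using Suc by simp
  also have "\<dots> = S * S ^\<^sub>m Suc k" using assms by (simp add: mult_assoc_dim)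
  finally show ?case .
qed (use assms in simp)

lemma smult_pow_mat:
  assumes A: "(A :: 'a :: comm_ring_1 mat) \<in> carrier_mat n n"
  shows "(a \<cdot>\<^sub>m A) ^\<^sub>m k = (a ^ k) \<cdot>\<^sub>m (A ^\<^sub>m k)"
proof (induction k)
  case (Suc k)
  have "(a \<cdot>\<^sub>m A) ^\<^sub>m Suc k = (a ^ k) \<cdot>\<^sub>m (A ^\<^sub>m k) * (a \<cdot>\<^sub>m A)"
    using Suc by simp
  also have "\<dots> = (a ^ k) \<cdot>\<^sub>m (A ^\<^sub>m k * (a \<cdot>\<^sub>m A))"
    using A by (intro mult_smult_assoc_mat) auto
  also have "\<dots> = (a ^ Suc k) \<cdot>\<^sub>m (A ^\<^sub>m Suc k)"
    using A by (auto simp: mult_smult_distrib[of _ n n])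
  finally show ?case .
qed (use A in auto)

lemma mult_eq_0_if_kernel_subset:
  assumes K: "K \<in> carrier_mat a c" and L: "L \<in> carrier_mat b c" and Z: "Z \<in> carrier_mat c d"
    and KZ: "K * Z = 0\<^sub>m a d" and ker: "mat_kernel K \<subseteq> mat_kernel L"
  shows "L * Z = 0\<^sub>m b d"
proof (rule mat_col_eqI)
  fix j assume "j < dim_col (0\<^sub>m b d)"
  hence j: "j < d" by simp
  have "K *\<^sub>v col Z j = 0\<^sub>v a" using col_mult2[OF K Z j] KZ j by simp
  hence "col Z j \<in> mat_kernel K" using Z j by (intro mat_kernelI[OF K]) auto
  hence "col Z j \<in> mat_kernel L" using ker by blast
  thus "col (L * Z) j = col (0\<^sub>m b d) j" using col_mult2[OF L Z j] L j by (simp add: mat_kernelD)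
qed (use L Z in auto)

lemma scalar_prod_self_eq_0:
  fixes v :: "real vec"
  assumes "v \<in> carrier_vec n" and "v \<bullet> v = 0"
  shows "v = 0\<^sub>v n"
  using conjugate_square_eq_0_vec[OF assms(1)] assms(2) by simp

lemma scalar_prod_mult_transpose:
  assumes "(C :: 'a :: comm_ring_1 mat) \<in> carrier_mat k c" and "x \<in> carrier_vec k"
  shows "x \<bullet> (C *\<^sub>v (transpose_mat C *\<^sub>v x)) = (transpose_mat C *\<^sub>v x) \<bullet> (transpose_mat C *\<^sub>v x)"
proof -
  have "x \<bullet> (C *\<^sub>v (transpose_mat C *\<^sub>v x)) = (C *\<^sub>v (transpose_mat C *\<^sub>v x)) \<bullet> x"
    using assms by (intro comm_scalar_prod[of _ k]) auto
  also have "\<dots> = (transpose_mat C *\<^sub>v x) \<bullet> (transpose_mat C *\<^sub>v x)"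
    using transpose_vec_mult_scalar[of "transpose_mat C" c k x "transpose_mat C *\<^sub>v x"] assms by simp
  finally show ?thesis .
qed

lemma inverse_exists_if_kernel_trivial:
  assumes K: "(K :: 'a :: field mat) \<in> carrier_mat k k" and ker: "mat_kernel K \<subseteq> {0\<^sub>v k}"
  obtains G where "G \<in> carrier_mat k k" "K * G = 1\<^sub>m k" "G * K = 1\<^sub>m k"
proof -
  have "det K \<noteq> 0"
    using det_0_iff_vec_prod_zero_field[OF K] ker K by (auto intro: mat_kernelI)
  from det_non_zero_imp_unit[OF K this, of "()"] that show ?thesis
    unfolding Units_def ring_mat_def by auto
qed

lemma transpose_inverse_of_symmetric:
  assumes K: "(K :: 'a :: comm_ring_1 mat) \<in> carrier_mat k k" and sym: "transpose_mat K = K"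
    and G: "G \<in> carrier_mat k k" and KG: "K * G = 1\<^sub>m k" and GK: "G * K = 1\<^sub>m k"
  shows "transpose_mat G = G"
proof -
  have GtK: "transpose_mat G * K = 1\<^sub>m k"
    using arg_cong[OF KG, of transpose_mat] K G sym by (simp add: transpose_mult_dim)
  have "transpose_mat G = transpose_mat G * (K * G)" using KG G by simp
  also have "\<dots> = transpose_mat G * K * G" using K G by (simp add: mult_assoc_dim)
  finally show ?thesis using GtK G by simp
qed

lemma gram_mat_inverse:
  assumes C: "(C :: real mat) \<in> carrier_mat k c" and ker: "mat_kernel (transpose_mat C) \<subseteq> {0\<^sub>v k}"
  obtains G where "G \<in> carrier_mat k k" "C * transpose_mat C * G = 1\<^sub>m k"
    "G * (C * transpose_mat C) = 1\<^sub>m k" "transpose_mat G = G"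
proof -
  have CCt: "C * transpose_mat C \<in> carrier_mat k k" using C by simp
  have "mat_kernel (C * transpose_mat C) \<subseteq> {0\<^sub>v k}"
  proof
    fix x assume "x \<in> mat_kernel (C * transpose_mat C)"
    hence x: "x \<in> carrier_vec k" and "C *\<^sub>v (transpose_mat C *\<^sub>v x) = 0\<^sub>v k"
      using C by (auto simp: mat_kernel_def mult_mat_vec_assoc_dim)
    hence "(transpose_mat C *\<^sub>v x) \<bullet> (transpose_mat C *\<^sub>v x) = 0"
      using scalar_prod_mult_transpose[OF C x] by simp
    hence "transpose_mat C *\<^sub>v x = 0\<^sub>v c" using C by (intro scalar_prod_self_eq_0) (use x in auto)
    hence "x \<in> mat_kernel (transpose_mat C)" using x C by (auto intro: mat_kernelI)
    thus "x \<in> {0\<^sub>v k}" using ker by blast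
  qed
  then obtain G where G: "G \<in> carrier_mat k k" "C * transpose_mat C * G = 1\<^sub>m k"
    "G * (C * transpose_mat C) = 1\<^sub>m k" by (rule inverse_exists_if_kernel_trivial[OF CCt])
  moreover have "transpose_mat G = G"
    by (rule transpose_inverse_of_symmetric[OF CCt _ G]) (use C in \<open>simp add: transpose_mult_dim\<close>)
  ultimately show ?thesis using that by blast
qed

section \<open>The Moore-Penrose inverse\<close>

definition append_col :: "'a mat \<Rightarrow> 'a vec \<Rightarrow> 'a mat" where
  "append_col A v = mat (dim_row A) (Suc (dim_col A))
     (\<lambda>(i, j). if j < dim_col A then A $$ (i, j) else v $ i)"

lemma append_col_dim [simp]:
  "dim_row (append_col A v) = dim_row A" "dim_col (append_col A v) = Suc (dim_col A)"
  unfolding append_col_def by simp_all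

lemma append_col_carrier [simp]: "A \<in> carrier_mat r c \<Longrightarrow> append_col A v \<in> carrier_mat r (Suc c)"
  by (intro carrier_matI) auto

lemma col_append_col:
  assumes "v \<in> carrier_vec (dim_row A)" and "j < Suc (dim_col A)"
  shows "col (append_col A v) j = (if j < dim_col A then col A j else v)"
  using assms unfolding append_col_def by (auto intro!: eq_vecI)

lemma append_col_last_col:
  assumes "A \<in> carrier_mat r (Suc c)"
  shows "append_col (mat r c (\<lambda>(i, j). A $$ (i, j))) (col A c) = A"
  using assms unfolding append_col_def by (auto intro!: eq_matI simp: less_Suc_eq)

lemma mult_append_col:
  assumes U: "U \<in> carrier_mat r k" and C: "C \<in> carrier_mat k c" and z: "z \<in> carrier_vec k"
  shows "U * append_col C z = append_col (U * C) (U *\<^sub>v z)"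
proof (rule mat_col_eqI)
  fix j assume "j < dim_col (append_col (U * C) (U *\<^sub>v z))"
  hence j: "j < Suc c" using U C by simp
  have "col (U * append_col C z) j = U *\<^sub>v col (append_col C z) j"
    using C U j by (intro col_mult2) auto
  thus "col (U * append_col C z) j = col (append_col (U * C) (U *\<^sub>v z)) j"
    using U C z j by (simp add: col_append_col mult_mat_vec_def)
qed (use U C in auto)

lemma append_col_mult_vec:
  assumes U: "(U :: 'a :: comm_semiring_0 mat) \<in> carrier_mat r k" and a: "a \<in> carrier_vec r"
    and w: "w \<in> carrier_vec (Suc k)"
  shows "append_col U a *\<^sub>v w = U *\<^sub>v vec k (($) w) + w $ k \<cdot>\<^sub>v a"
proof (rule eq_vecI)
  fix i assume "i < dim_vec (U *\<^sub>v vec k (($) w) + w $ k \<cdot>\<^sub>v a)"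
  hence i: "i < r" using a by simp
  have "(append_col U a *\<^sub>v w) $ i = (\<Sum>t<Suc k. append_col U a $$ (i, t) * w $ t)"
    using U w i by (simp add: scalar_prod_def lessThan_atLeast0)
  also have "\<dots> = (\<Sum>t<k. U $$ (i, t) * w $ t) + w $ k * a $ i"
    using U i by (simp add: append_col_def mult.commute)
  finally show "(append_col U a *\<^sub>v w) $ i = (U *\<^sub>v vec k (($) w) + w $ k \<cdot>\<^sub>v a) $ i"
    using U a w i by (simp add: scalar_prod_def lessThan_atLeast0)
qed (use U a in auto)

lemma kernel_transpose_append_col:
  assumes C: "C \<in> carrier_mat k c" and ker: "mat_kernel (transpose_mat C) \<subseteq> {0\<^sub>v k}"
    and z: "z \<in> carrier_vec k"
  shows "mat_kernel (transpose_mat (append_col C z)) \<subseteq> {0\<^sub>v k}"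
proof
  fix y assume "y \<in> mat_kernel (transpose_mat (append_col C z))"
  hence y: "y \<in> carrier_vec k" and h: "transpose_mat (append_col C z) *\<^sub>v y = 0\<^sub>v (Suc c)"
    using C by (auto simp: mat_kernel_def)
  have "transpose_mat C *\<^sub>v y = 0\<^sub>v c"
  proof (rule eq_vecI)
    fix j assume "j < dim_vec (0\<^sub>v c)"
    hence j: "j < c" by simp
    have "(transpose_mat (append_col C z) *\<^sub>v y) $ j = 0" using h j by simp
    thus "(transpose_mat C *\<^sub>v y) $ j = 0\<^sub>v c $ j" using C z j by (simp add: col_append_col)
  qed (use C in simp)
  hence "y \<in> mat_kernel (transpose_mat C)" using C y by (auto intro: mat_kernelI)
  thus "y \<in> {0\<^sub>v k}" using ker by blast
qed

lemma kernel_append_col: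
  assumes U: "(U :: 'a :: field mat) \<in> carrier_mat r k" and ker: "mat_kernel U \<subseteq> {0\<^sub>v k}"
    and a: "a \<in> carrier_vec r" and a_out: "a \<notin> (*\<^sub>v) U ` carrier_vec k"
  shows "mat_kernel (append_col U a) \<subseteq> {0\<^sub>v (Suc k)}"
proof
  fix w assume "w \<in> mat_kernel (append_col U a)"
  hence w: "w \<in> carrier_vec (Suc k)" and "append_col U a *\<^sub>v w = 0\<^sub>v r"
    using U by (auto simp: mat_kernel_def)
  hence comb: "U *\<^sub>v vec k (($) w) + w $ k \<cdot>\<^sub>v a = 0\<^sub>v r"
    using append_col_mult_vec[OF U a w] by simp
  have wk: "w $ k = 0"
  proof (rule ccontr)
    assume nz: "w $ k \<noteq> 0"
    have "U *\<^sub>v ((- 1 / w $ k) \<cdot>\<^sub>v vec k (($) w)) = a"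
    proof (rule eq_vecI)
      fix i assume "i < dim_vec a"
      hence i: "i < r" using a by simp
      have "(U *\<^sub>v vec k (($) w)) $ i = - (w $ k * a $ i)"
        using arg_cong[OF comb, of "\<lambda>v. v $ i"] U a i by (simp add: add_eq_0_iff2)
      thus "(U *\<^sub>v ((- 1 / w $ k) \<cdot>\<^sub>v vec k (($) w))) $ i = a $ i"
        using U i nz by (simp add: mult_mat_vec field_simps)
    qed (use U a in auto)
    thus False using a_out by auto
  qed
  have "U *\<^sub>v vec k (($) w) = 0\<^sub>v r"
  proof (rule eq_vecI)
    fix i assume "i < dim_vec (0\<^sub>v r)"
    thus "(U *\<^sub>v vec k (($) w)) $ i = 0\<^sub>v r $ i"
      using arg_cong[OF comb, of "\<lambda>v. v $ i"] U a wk by simp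
  qed (use U in simp)
  hence "vec k (($) w) \<in> mat_kernel U" using U by (auto intro: mat_kernelI)
  hence "vec k (($) w) = 0\<^sub>v k" using ker by blast
  hence "w $ i = 0" if "i < k" for i using that by (metis index_vec index_zero_vec(1))
  thus "w \<in> {0\<^sub>v (Suc k)}" using wk w by (auto intro!: eq_vecI simp: less_Suc_eq)
qed

lemma append_col_mult_block_diag:
  assumes U: "(U :: 'a :: comm_ring_1 mat) \<in> carrier_mat r k" and C: "C \<in> carrier_mat k c"
    and a: "a \<in> carrier_vec r"
  shows "append_col U a * four_block_mat C (0\<^sub>m k 1) (0\<^sub>m 1 c) (1\<^sub>m 1) = append_col (U * C) a"
    (is "_ * ?D = _")
proof (rule mat_col_eqI)
  have D: "?D \<in> carrier_mat (Suc k) (Suc c)" using C by auto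
  fix j assume "j < dim_col (append_col (U * C) a)"
  hence j: "j < Suc c" using C by simp
  have d: "col ?D j \<in> carrier_vec (Suc k)" using D j by simp
  have "col (append_col U a * ?D) j = append_col U a *\<^sub>v col ?D j"
    by (rule col_mult2) (use U D j in auto)
  also have "\<dots> = U *\<^sub>v vec k (($) (col ?D j)) + col ?D j $ k \<cdot>\<^sub>v a"
    by (rule append_col_mult_vec[OF U a d])
  also have "\<dots> = col (append_col (U * C) a) j"
  proof (cases "j < c")
    case True
    have "vec k (($) (col ?D j)) = col C j" using C True by (auto intro!: eq_vecI)
    thus ?thesis using U C a True by (auto simp: col_append_col intro!: eq_vecI)
  next
    case False
    hence "j = c" using j by simp
    moreover have "vec k (($) (col ?D c)) = 0\<^sub>v k" using C by (auto intro!: eq_vecI)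
    ultimately show ?thesis using U C a by (auto simp: col_append_col intro!: eq_vecI)
  qed
  finally show "col (append_col U a * ?D) j = col (append_col (U * C) a) j" .
qed (use U C in auto)

lemma kernel_transpose_block_diag:
  assumes C: "(C :: 'a :: comm_ring_1 mat) \<in> carrier_mat k c"
    and ker: "mat_kernel (transpose_mat C) \<subseteq> {0\<^sub>v k}"
  shows "mat_kernel (transpose_mat (four_block_mat C (0\<^sub>m k 1) (0\<^sub>m 1 c) (1\<^sub>m 1))) \<subseteq> {0\<^sub>v (Suc k)}"
    (is "mat_kernel (transpose_mat ?D) \<subseteq> _")
proof
  fix y assume "y \<in> mat_kernel (transpose_mat ?D)"
  hence y: "y \<in> carrier_vec (Suc k)" and h: "transpose_mat ?D *\<^sub>v y = 0\<^sub>v (Suc c)"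
    using C by (auto simp: mat_kernel_def)
  have entry: "(transpose_mat ?D *\<^sub>v y) $ j = (\<Sum>t<k. ?D $$ (t, j) * y $ t) + ?D $$ (k, j) * y $ k"
    if "j < Suc c" for j
    using that C y by (simp add: scalar_prod_def lessThan_atLeast0)
  have "y $ k = (transpose_mat ?D *\<^sub>v y) $ c" using entry[of c] C by simp
  also have "\<dots> = 0" using h by simp
  finally have yk: "y $ k = 0" .
  have "transpose_mat C *\<^sub>v vec k (($) y) = 0\<^sub>v c"
  proof (rule eq_vecI)
    fix j assume "j < dim_vec (0\<^sub>v c)"
    hence j: "j < c" by simp
    have "(transpose_mat C *\<^sub>v vec k (($) y)) $ j = (\<Sum>t<k. ?D $$ (t, j) * y $ t)"
      using C j by (simp add: scalar_prod_def lessThan_atLeast0)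
    thus "(transpose_mat C *\<^sub>v vec k (($) y)) $ j = 0\<^sub>v c $ j"
      using entry[of j] h j yk by simp
  qed (use C in simp)
  hence "vec k (($) y) \<in> mat_kernel (transpose_mat C)" using C by (auto intro: mat_kernelI)
  hence "vec k (($) y) = 0\<^sub>v k" using ker by blast
  hence "y $ i = 0" if "i < k" for i using that by (metis index_vec index_zero_vec(1))
  thus "y \<in> {0\<^sub>v (Suc k)}" using yk y by (auto intro!: eq_vecI simp: less_Suc_eq)
qed

(* Induction on the columns: the last column of A is either in the range of U, and then
   absorbed into C, or it is appended to U. *)
lemma full_rank_factorization:
  assumes "(A :: 'a :: field mat) \<in> carrier_mat r c"
  shows "\<exists>k U C. U \<in> carrier_mat r k \<and> C \<in> carrier_mat k c \<and> A = U * C \<and>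
    mat_kernel U \<subseteq> {0\<^sub>v k} \<and> mat_kernel (transpose_mat C) \<subseteq> {0\<^sub>v k}"
  using assms
proof (induction c arbitrary: A)
  case 0
  have "A = 0\<^sub>m r 0 * 0\<^sub>m 0 0" using 0 by (intro eq_matI) auto
  moreover have "mat_kernel (0\<^sub>m r 0 :: 'a mat) \<subseteq> {0\<^sub>v 0}"
    "mat_kernel (transpose_mat (0\<^sub>m 0 0 :: 'a mat)) \<subseteq> {0\<^sub>v 0}"
    unfolding mat_kernel_def by (auto intro!: eq_vecI)
  ultimately show ?case
    by (intro exI[of _ 0] exI[of _ "0\<^sub>m r 0 :: 'a mat"] exI[of _ "0\<^sub>m 0 0 :: 'a mat"]) simp
next
  case (Suc c)
  have "mat r c (\<lambda>(i, j). A $$ (i, j)) \<in> carrier_mat r c" by simp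
  from Suc.IH[OF this] obtain k U C where U: "U \<in> carrier_mat r k" and C: "C \<in> carrier_mat k c"
    and UC: "mat r c (\<lambda>(i, j). A $$ (i, j)) = U * C"
    and kerU: "mat_kernel U \<subseteq> {0\<^sub>v k}" and kerC: "mat_kernel (transpose_mat C) \<subseteq> {0\<^sub>v k}"
    by blast
  have A: "A = append_col (U * C) (col A c)"
    using append_col_last_col[OF Suc.prems] unfolding UC by (rule sym)
  have a: "col A c \<in> carrier_vec r" using Suc.prems by auto
  show ?case
  proof (cases "col A c \<in> (*\<^sub>v) U ` carrier_vec k")
    case True
    then obtain z where z: "z \<in> carrier_vec k" and Uz: "col A c = U *\<^sub>v z" by blast
    have "A = U * append_col C z" unfolding mult_append_col[OF U C z] Uz[symmetric] by (rule A)
    moreover have "append_col C z \<in> carrier_mat k (Suc c)" using C by simp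
    ultimately show ?thesis using U kerU kernel_transpose_append_col[OF C kerC z] by blast
  next
    case False
    let ?D = "four_block_mat C (0\<^sub>m k 1) (0\<^sub>m 1 c) (1\<^sub>m 1)"
    have "A = append_col U (col A c) * ?D" unfolding append_col_mult_block_diag[OF U C a]
      by (rule A)
    moreover have "append_col U (col A c) \<in> carrier_mat r (Suc k)"
      and "?D \<in> carrier_mat (Suc k) (Suc c)"
      using U C by auto
    ultimately show ?thesis
      using kernel_append_col[OF U kerU a False] kernel_transpose_block_diag[OF C kerC] by blast
  qed
qed

definition penrose_conditions :: "'a :: comm_ring_1 mat \<Rightarrow> 'a mat \<Rightarrow> bool" where
  "penrose_conditions A X \<longleftrightarrow> X \<in> carrier_mat (dim_col A) (dim_row A) \<and>
     A * X * A = A \<and> X * A * X = X \<and>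
     transpose_mat (A * X) = A * X \<and> transpose_mat (X * A) = X * A"

lemma penrose_conditions_solvable:
  assumes A: "(A :: real mat) \<in> carrier_mat r c"
  shows "\<exists>X. penrose_conditions A X"
proof -
  obtain k U C where U: "U \<in> carrier_mat r k" and C: "C \<in> carrier_mat k c" and AUC: "A = U * C"
    and kerU: "mat_kernel U \<subseteq> {0\<^sub>v k}" and kerC: "mat_kernel (transpose_mat C) \<subseteq> {0\<^sub>v k}"
    using full_rank_factorization[OF A] by blast
  obtain G1 where G1: "G1 \<in> carrier_mat k k" "C * transpose_mat C * G1 = 1\<^sub>m k"
    "G1 * (C * transpose_mat C) = 1\<^sub>m k" "transpose_mat G1 = G1"
    by (rule gram_mat_inverse[OF C kerC])
  obtain G2 where G2: "G2 \<in> carrier_mat k k" "transpose_mat U * U * G2 = 1\<^sub>m k"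
    "G2 * (transpose_mat U * U) = 1\<^sub>m k" "transpose_mat G2 = G2"
    by (rule gram_mat_inverse[of "transpose_mat U" k r]) (use U kerU in simp_all)
  have cancel_C: "C * (transpose_mat C * (G1 * Z)) = Z" if "dim_row Z = k" for Z
  proof -
    have "C * (transpose_mat C * (G1 * Z)) = C * transpose_mat C * G1 * Z"
      using C G1(1) that by (simp add: mult_assoc_dim)
    thus ?thesis using G1 that by simp
  qed
  have cancel_U: "G2 * (transpose_mat U * (U * Z)) = Z" if "dim_row Z = k" for Z
  proof -
    have "G2 * (transpose_mat U * (U * Z)) = G2 * (transpose_mat U * U) * Z"
      using U G2(1) that by (simp add: mult_assoc_dim)
    thus ?thesis using G2 that by simp
  qed
  (* For a full-rank factorization A = U C the inverse is C^T (C C^T)^-1 (U^T U)^-1 U^T. *)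
  define X where "X = transpose_mat C * (G1 * (G2 * transpose_mat U))"
  have AX: "A * X = U * (G2 * transpose_mat U)"
    unfolding AUC X_def using U C G1 G2 by (simp add: mult_assoc_dim cancel_C)
  have XA: "X * A = transpose_mat C * (G1 * C)"
    unfolding AUC X_def using U C G1 G2 by (simp add: mult_assoc_dim cancel_U)
  have "penrose_conditions A X"
    unfolding penrose_conditions_def
  proof (intro conjI)
    show "X \<in> carrier_mat (dim_col A) (dim_row A)" unfolding X_def AUC using U C G1 G2 by simp
    show "A * X * A = A" unfolding AX using U C G2 by (simp add: AUC mult_assoc_dim cancel_U)
    show "X * A * X = X" unfolding XA using U C G1 G2 by (simp add: X_def mult_assoc_dim cancel_C)
    show "transpose_mat (A * X) = A * X"
      unfolding AX using U G2 by (simp add: transpose_mult_dim mult_assoc_dim)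
    show "transpose_mat (X * A) = X * A"
      unfolding XA using C G1 by (simp add: transpose_mult_dim mult_assoc_dim)
  qed
  thus ?thesis ..
qed

lemma penrose_conditions_left:
  assumes "penrose_conditions A X" and "penrose_conditions A Y"
  shows "X = X * (A * Y)"
proof -
  obtain r c where A: "A \<in> carrier_mat r c" by blast
  from assms A have X: "X \<in> carrier_mat c r" and Y: "Y \<in> carrier_mat c r"
    and X2: "X * A * X = X" and X3: "transpose_mat (A * X) = A * X"
    and Y1: "A * Y * A = A" and Y3: "transpose_mat (A * Y) = A * Y"
    unfolding penrose_conditions_def by auto
  have X2': "X * (A * X) = X" using X2 A X by (simp add: mult_assoc_dim)
  have AtAY: "transpose_mat A = transpose_mat A * (A * Y)"
  proof -
    have "transpose_mat A = transpose_mat (A * Y * A)" using Y1 by simp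
    also have "\<dots> = transpose_mat A * transpose_mat (A * Y)"
      using A Y by (simp add: transpose_mult_dim mult_assoc_dim)
    finally show ?thesis using Y3 by simp
  qed
  have AXAY: "A * X = A * X * (A * Y)"
  proof -
    have "A * X = transpose_mat X * transpose_mat A"
      using X3 A X by (metis transpose_mult_dim carrier_matD(1,2))
    also have "\<dots> = transpose_mat X * (transpose_mat A * (A * Y))" by (simp only: AtAY[symmetric])
    also have "\<dots> = transpose_mat (A * X) * (A * Y)"
      using A X Y by (simp add: transpose_mult_dim mult_assoc_dim)
    finally show ?thesis using X3 by simp
  qed
  have "X = X * (A * X * (A * Y))" using X2' AXAY by simp
  also have "\<dots> = X * (A * X) * (A * Y)" using A X Y by (simp add: mult_assoc_dim)
  finally show ?thesis using X2' by simp
qed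

lemma penrose_conditions_right:
  assumes "penrose_conditions A X" and "penrose_conditions A Y"
  shows "Y = X * (A * Y)"
proof -
  obtain r c where A: "A \<in> carrier_mat r c" by blast
  from assms A have X: "X \<in> carrier_mat c r" and Y: "Y \<in> carrier_mat c r"
    and X1: "A * X * A = A" and X4: "transpose_mat (X * A) = X * A"
    and Y2: "Y * A * Y = Y" and Y4: "transpose_mat (Y * A) = Y * A"
    unfolding penrose_conditions_def by auto
  have Y2': "Y * (A * Y) = Y" using Y2 A Y by (simp add: mult_assoc_dim)
  have AtXAAt: "transpose_mat A = X * (A * transpose_mat A)"
  proof -
    have "transpose_mat A = transpose_mat (A * (X * A))" using X1 A X by (simp add: mult_assoc_dim)
    also have "\<dots> = transpose_mat (X * A) * transpose_mat A" using A X
      by (simp add: transpose_mult_dim)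
    finally show ?thesis using X4 A X by (simp add: mult_assoc_dim)
  qed
  have YAXA: "Y * A = X * (A * (Y * A))"
  proof -
    have "Y * A = transpose_mat A * transpose_mat Y"
      using Y4 A Y by (metis transpose_mult_dim carrier_matD(1,2))
    also have "\<dots> = X * (A * transpose_mat A) * transpose_mat Y" by (simp only: AtXAAt[symmetric])
    also have "\<dots> = X * (A * (transpose_mat A * transpose_mat Y))" using A X Y
      by (simp add: mult_assoc_dim)
    also have "transpose_mat A * transpose_mat Y = transpose_mat (Y * A)"
      using A Y by (simp add: transpose_mult_dim)
    finally show ?thesis using Y4 by simp
  qed
  have "Y = Y * A * Y" using Y2 by simp
  also have "\<dots> = X * (A * (Y * A)) * Y" by (simp only: YAXA[symmetric])
  also have "\<dots> = X * (A * (Y * (A * Y)))" using A X Y by (simp add: mult_assoc_dim)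
  finally show ?thesis using Y2' by simp
qed

lemma penrose_conditions_unique:
  "penrose_conditions A X \<Longrightarrow> penrose_conditions A Y \<Longrightarrow> X = Y"
  using penrose_conditions_left penrose_conditions_right by metis

lemma moore_penrose_conditions:
  assumes "(A :: real mat) \<in> carrier_mat r c"
  shows "moore_penrose A \<in> carrier_mat c r" "A * moore_penrose A * A = A"
    "moore_penrose A * A * moore_penrose A = moore_penrose A"
    "transpose_mat (A * moore_penrose A) = A * moore_penrose A"
    "transpose_mat (moore_penrose A * A) = moore_penrose A * A"
proof -
  have "moore_penrose A = (THE X. penrose_conditions A X)"
    unfolding moore_penrose_def penrose_conditions_def ..
  moreover have "\<exists>!X. penrose_conditions A X"
    using penrose_conditions_solvable[OF assms] penrose_conditions_unique by blast
  ultimately have "penrose_conditions A (moore_penrose A)" using theI' by metis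
  thus "moore_penrose A \<in> carrier_mat c r" "A * moore_penrose A * A = A"
    "moore_penrose A * A * moore_penrose A = moore_penrose A"
    "transpose_mat (A * moore_penrose A) = A * moore_penrose A"
    "transpose_mat (moore_penrose A * A) = moore_penrose A * A"
    using assms unfolding penrose_conditions_def by auto
qed

lemma moore_penrose_fixes_kernel_orthogonal:
  assumes M: "(M :: real mat) \<in> carrier_mat r c" and g: "g \<in> carrier_vec c"
    and perp: "\<And>z. z \<in> mat_kernel M \<Longrightarrow> g \<bullet> z = 0"
  shows "moore_penrose M * M *\<^sub>v g = g"
proof -
  note Mp = moore_penrose_conditions[OF M]
  define Q where "Q = moore_penrose M * M"
  have Q: "Q \<in> carrier_mat c c" unfolding Q_def using Mp(1) M by simp
  have QQ: "Q * Q = Q" and MQ: "M * Q = M" and Qt: "transpose_mat Q = Q"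
    unfolding Q_def using Mp M by (simp_all add: mult_assoc_dim)
  define d where "d = g - Q *\<^sub>v g"
  have d: "d \<in> carrier_vec c" unfolding d_def using g Q by simp
  have "M *\<^sub>v d = M *\<^sub>v g - (M * Q) *\<^sub>v g"
    unfolding d_def using M Q g by (simp add: mult_minus_distrib_mat_vec mult_mat_vec_assoc_dim)
  hence "d \<in> mat_kernel M" unfolding MQ using M g d by (auto intro!: mat_kernelI)
  hence gd: "g \<bullet> d = 0" by (rule perp)
  have "Q *\<^sub>v d = Q *\<^sub>v g - (Q * Q) *\<^sub>v g"
    unfolding d_def using Q g by (simp add: mult_minus_distrib_mat_vec mult_mat_vec_assoc_dim)
  hence Qd: "Q *\<^sub>v d = 0\<^sub>v c" unfolding QQ using Q g by auto
  have "(Q *\<^sub>v g) \<bullet> d = g \<bullet> (Q *\<^sub>v d)"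
    using transpose_vec_mult_scalar[OF Q d g] Qt by simp
  hence "(Q *\<^sub>v g) \<bullet> d = 0" using Qd g by simp
  hence "d \<bullet> d = 0"
    using gd unfolding d_def by (subst minus_scalar_prod_distrib) (use g Q d in \<open>auto simp: d_def\<close>)
  hence "d = 0\<^sub>v c" by (rule scalar_prod_self_eq_0[OF d])
  show ?thesis unfolding Q_def[symmetric]
  proof (rule eq_vecI)
    fix i assume i: "i < dim_vec g"
    hence "d $ i = 0" using \<open>d = 0\<^sub>v c\<close> g by simp
    thus "(Q *\<^sub>v g) $ i = g $ i" using i Q g unfolding d_def by simp
  qed (use Q g in simp)
qed

lemma moore_penrose_range_absorb:
  assumes E: "(E :: real mat) \<in> carrier_mat r c" and B: "B \<in> carrier_mat r n"
    and ker: "mat_kernel (transpose_mat E) \<subseteq> mat_kernel (transpose_mat B)"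
  shows "E * moore_penrose E * B = B"
proof -
  note Ep = moore_penrose_conditions[OF E]
  define Z where "Z = 1\<^sub>m r - E * moore_penrose E"
  have Z: "Z \<in> carrier_mat r r" unfolding Z_def using E Ep(1) by (intro minus_carrier_mat) auto
  have Zt: "transpose_mat Z = Z" unfolding Z_def using E Ep
    by (subst transpose_minus[of _ r r]) auto
  have "Z * E = E - E * moore_penrose E * E"
    unfolding Z_def using E Ep(1) by (simp add: minus_mult_distrib_mat[of _ r r])
  hence ZE: "Z * E = 0\<^sub>m r c" using Ep(2) E by simp
  have "transpose_mat E * Z = transpose_mat (Z * E)" using Z E Zt by (simp add: transpose_mult_dim)
  hence EtZ: "transpose_mat E * Z = 0\<^sub>m c r" unfolding ZE by simp
  have BtZ: "transpose_mat B * Z = 0\<^sub>m n r"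
    by (rule mult_eq_0_if_kernel_subset[OF _ _ Z EtZ ker]) (use E B in auto)
  have "Z * B = transpose_mat (transpose_mat B * Z)" using Z B Zt by (simp add: transpose_mult_dim)
  hence "Z * B = 0\<^sub>m r n" unfolding BtZ by simp
  moreover have "Z * B = B - E * moore_penrose E * B"
    unfolding Z_def using E B Ep(1) by (simp add: minus_mult_distrib_mat[of _ r r])
  ultimately have D: "B - E * moore_penrose E * B = 0\<^sub>m r n" by simp
  show ?thesis
  proof (rule eq_matI)
    fix i j assume ij: "i < dim_row B" "j < dim_col B"
    show "(E * moore_penrose E * B) $$ (i, j) = B $$ (i, j)"
      using arg_cong[OF D, of "\<lambda>A. A $$ (i, j)"] E B Ep(1) ij by simp
  qed (use E B Ep(1) in simp_all)
qed

lemma moore_penrose_in_range_transpose: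
  assumes "(E :: real mat) \<in> carrier_mat r c"
  shows "moore_penrose E = transpose_mat E * (transpose_mat (moore_penrose E) * moore_penrose E)"
proof -
  note Ep = moore_penrose_conditions[OF assms]
  have "moore_penrose E = transpose_mat (moore_penrose E * E) * moore_penrose E"
    using Ep by simp
  also have "\<dots> = transpose_mat E * (transpose_mat (moore_penrose E) * moore_penrose E)"
    using assms Ep(1) by (simp add: transpose_mult_dim mult_assoc_dim)
  finally show ?thesis .
qed

section \<open>Positive definite matrices\<close>

lemma pos_def_mat_carrier: "pos_def_mat n H \<Longrightarrow> H \<in> carrier_mat n n"
  unfolding pos_def_mat_def by simp

lemma pos_def_mat_kernel:
  assumes "pos_def_mat n H"
  shows "mat_kernel H \<subseteq> {0\<^sub>v n}"
proof
  fix x assume "x \<in> mat_kernel H"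
  hence x: "x \<in> carrier_vec n" and "H *\<^sub>v x = 0\<^sub>v n"
    using pos_def_mat_carrier[OF assms] by (auto simp: mat_kernel_def)
  hence "\<not> x \<bullet> (H *\<^sub>v x) > 0" by simp
  thus "x \<in> {0\<^sub>v n}" using assms x unfolding pos_def_mat_def by auto
qed

lemma pos_def_mat_transpose:
  assumes "pos_def_mat n H"
  shows "pos_def_mat n (transpose_mat H)"
  unfolding pos_def_mat_def
proof (intro conjI ballI impI)
  have H: "H \<in> carrier_mat n n" by (rule pos_def_mat_carrier[OF assms])
  thus "transpose_mat H \<in> carrier_mat n n" by simp
  fix x :: "real vec" assume x: "x \<in> carrier_vec n" and "x \<noteq> 0\<^sub>v n"
  hence "x \<bullet> (H *\<^sub>v x) > 0" using assms unfolding pos_def_mat_def by blast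
  also have "x \<bullet> (H *\<^sub>v x) = x \<bullet> (transpose_mat H *\<^sub>v x)"
    using transpose_vec_mult_scalar[OF H x x] comm_scalar_prod[of x n] H x by simp
  finally show "x \<bullet> (transpose_mat H *\<^sub>v x) > 0" .
qed

lemma mat_inv_inverse:
  assumes P: "(P :: real mat) \<in> carrier_mat n n" and ker: "mat_kernel P \<subseteq> {0\<^sub>v n}"
  shows "mat_inv n P \<in> carrier_mat n n" "P * mat_inv n P = 1\<^sub>m n" "mat_inv n P * P = 1\<^sub>m n"
proof -
  obtain G where G: "G \<in> carrier_mat n n" "P * G = 1\<^sub>m n" "G * P = 1\<^sub>m n"
    by (rule inverse_exists_if_kernel_trivial[OF P ker])
  have "mat_inv n P = G" unfolding mat_inv_def
  proof (rule the_equality)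
    fix Q assume "Q \<in> carrier_mat n n \<and> P * Q = 1\<^sub>m n \<and> Q * P = 1\<^sub>m n"
    hence Q: "Q \<in> carrier_mat n n" "Q * P = 1\<^sub>m n" by auto
    have "Q = Q * (P * G)" using G Q by simp
    also have "\<dots> = Q * P * G" using G(1) Q(1) P by (simp add: mult_assoc_dim)
    finally show "Q = G" using Q G by simp
  qed (use G in auto)
  thus "mat_inv n P \<in> carrier_mat n n" "P * mat_inv n P = 1\<^sub>m n" "mat_inv n P * P = 1\<^sub>m n"
    using G by auto
qed

lemma pos_def_mat_inv:
  assumes "pos_def_mat n P"
  shows "pos_def_mat n (mat_inv n P)"
  unfolding pos_def_mat_def
proof (intro conjI ballI impI)
  have P: "P \<in> carrier_mat n n" by (rule pos_def_mat_carrier[OF assms])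
  note Pi = mat_inv_inverse[OF P pos_def_mat_kernel[OF assms]]
  show "mat_inv n P \<in> carrier_mat n n" by (rule Pi(1))
  fix y :: "real vec" assume y: "y \<in> carrier_vec n" and y0: "y \<noteq> 0\<^sub>v n"
  define x where "x = mat_inv n P *\<^sub>v y"
  have x: "x \<in> carrier_vec n" unfolding x_def using Pi y by simp
  have Px: "P *\<^sub>v x = y" unfolding x_def using Pi P y by (simp flip: mult_mat_vec_assoc_dim)
  hence "x \<noteq> 0\<^sub>v n" using y0 P by auto
  hence "x \<bullet> (P *\<^sub>v x) > 0" using assms x unfolding pos_def_mat_def by blast
  also have "x \<bullet> (P *\<^sub>v x) = y \<bullet> x" using Px comm_scalar_prod[OF x, of y] y by simp
  finally show "y \<bullet> (mat_inv n P *\<^sub>v y) > 0" unfolding x_def .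
qed

lemma kernel_mult_pos_def_mult_transpose:
  assumes H: "pos_def_mat n H" and B: "B \<in> carrier_mat m n"
  shows "mat_kernel (B * H * transpose_mat B) \<subseteq> mat_kernel (transpose_mat B)"
proof
  have Hc: "H \<in> carrier_mat n n" by (rule pos_def_mat_carrier[OF H])
  fix z assume "z \<in> mat_kernel (B * H * transpose_mat B)"
  hence z: "z \<in> carrier_vec m" and "B *\<^sub>v (H *\<^sub>v (transpose_mat B *\<^sub>v z)) = 0\<^sub>v m"
    using B Hc by (auto simp: mat_kernel_def mult_mat_vec_assoc_dim)
  hence "(transpose_mat B *\<^sub>v z) \<bullet> (H *\<^sub>v (transpose_mat B *\<^sub>v z)) = 0"
    using transpose_vec_mult_scalar[OF B, of "H *\<^sub>v (transpose_mat B *\<^sub>v z)" z] B Hc by simp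
  hence "transpose_mat B *\<^sub>v z = 0\<^sub>v n"
    using H B z unfolding pos_def_mat_def
      by (metis less_irrefl mult_mat_vec_carrier transpose_carrier_mat)
  thus "z \<in> mat_kernel (transpose_mat B)" using B z by (auto intro: mat_kernelI)
qed

section \<open>Eigenvalues and powers\<close>

lemma (in field_hom) eigenvalue_hom_iff:
  assumes A: "A \<in> carrier_mat n n"
  shows "eigenvalue (mat\<^sub>h A) (hom a) \<longleftrightarrow> eigenvalue A a"
proof -
  have "eigenvalue (mat\<^sub>h A) (hom a) \<longleftrightarrow> poly (char_poly (mat\<^sub>h A)) (hom a) = 0"
    using A by (intro eigenvalue_root_char_poly) simp
  also have "\<dots> \<longleftrightarrow> poly (char_poly A) a = 0" by (simp add: char_poly_hom[OF A])
  also have "\<dots> \<longleftrightarrow> eigenvalue A a" using eigenvalue_root_char_poly[OF A] by simp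
  finally show ?thesis .
qed

lemma eigenvalue_mult_swap:
  fixes U V :: "'a :: field mat"
  assumes U: "U \<in> carrier_mat N n" and V: "V \<in> carrier_mat n N" and l: "l \<noteq> 0"
    and ev: "eigenvalue (U * V) l"
  shows "eigenvalue (V * U) l"
proof -
  from ev obtain w where w: "w \<in> carrier_vec N" "w \<noteq> 0\<^sub>v N" and UVw: "(U * V) *\<^sub>v w = l \<cdot>\<^sub>v w"
    unfolding eigenvalue_def eigenvector_def using U by auto
  define u where "u = V *\<^sub>v w"
  have u: "u \<in> carrier_vec n" unfolding u_def using V w by simp
  have "(V * U) *\<^sub>v u = V *\<^sub>v ((U * V) *\<^sub>v w)" unfolding u_def using U V w by simp
  also have "\<dots> = l \<cdot>\<^sub>v u" unfolding UVw u_def using V w by (simp add: mult_mat_vec)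
  finally have VUu: "(V * U) *\<^sub>v u = l \<cdot>\<^sub>v u" .
  have "u \<noteq> 0\<^sub>v n"
  proof
    assume "u = 0\<^sub>v n"
    hence lw: "l \<cdot>\<^sub>v w = 0\<^sub>v N" using UVw U V w unfolding u_def by (simp add: mult_mat_zero_vec)
    have "w = 0\<^sub>v N"
    proof (rule eq_vecI)
      fix i assume i: "i < dim_vec (0\<^sub>v N)"
      hence "l * w $ i = 0" using arg_cong[OF lw, of "\<lambda>v. v $ i"] w by simp
      thus "w $ i = 0\<^sub>v N $ i" using l i by simp
    qed (use w in simp)
    thus False using w by simp
  qed
  thus ?thesis unfolding eigenvalue_def eigenvector_def using u VUu V U by auto
qed

lemma power_convergent_imp_eq_1:
  fixes l :: complex
  assumes lim: "(\<lambda>k. l ^ k) \<longlonglongrightarrow> L" and ge: "norm l \<ge> 1"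
  shows "l = 1"
proof -
  have "(\<lambda>k. l ^ Suc k) \<longlonglongrightarrow> L" using LIMSEQ_Suc[OF lim] by simp
  moreover have "(\<lambda>k. l ^ Suc k) \<longlonglongrightarrow> l * L" using tendsto_mult_left[OF lim, of l] by simp
  ultimately have eq: "L = l * L" using LIMSEQ_unique by blast
  have "1 \<le> norm L"
    using tendsto_norm[OF lim] ge by (intro LIMSEQ_le_const) (auto simp: norm_power one_le_power)
  thus ?thesis using eq by (metis mult_cancel_right1 norm_zero not_one_le_zero)
qed

lemma eigenvalue_norm_less_1_if_powers_converge:
  fixes S :: "real mat"
  assumes S: "S \<in> carrier_mat N N"
    and conv: "\<And>w i. w \<in> carrier_vec N \<Longrightarrow> i < N \<Longrightarrow> convergent (\<lambda>k. (S ^\<^sub>m k *\<^sub>v w) $ i)"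
    and ev: "eigenvalue (map_mat complex_of_real S) l" and l1: "l \<noteq> 1"
  shows "norm l < 1"
proof (rule ccontr)
  assume "\<not> norm l < 1"
  hence ge: "norm l \<ge> 1" by simp
  let ?Sc = "map_mat complex_of_real S"
  have Sc: "?Sc \<in> carrier_mat N N" using S by simp
  from ev obtain v where evv: "eigenvector ?Sc v l" unfolding eigenvalue_def by auto
  hence v: "v \<in> carrier_vec N" "v \<noteq> 0\<^sub>v N" using S unfolding eigenvector_def by auto
  then obtain i where i: "i < N" and vi: "v $ i \<noteq> 0" by (metis eq_vecI carrier_vecD index_zero_vec)
  have entry: "(\<lambda>k. (S ^\<^sub>m k) $$ (i, j)) \<longlonglongrightarrow> lim (\<lambda>k. (S ^\<^sub>m k) $$ (i, j))" if j: "j < N" for j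
  proof -
    have "convergent (\<lambda>k. (S ^\<^sub>m k *\<^sub>v unit_vec N j) $ i)" using conv i j by simp
    moreover have "(S ^\<^sub>m k *\<^sub>v unit_vec N j) $ i = (S ^\<^sub>m k) $$ (i, j)" for k
      using S i j by simp
    ultimately show ?thesis by (simp add: convergent_LIMSEQ_iff)
  qed
  have "(?Sc ^\<^sub>m k *\<^sub>v v) $ i = (\<Sum>j<N. complex_of_real ((S ^\<^sub>m k) $$ (i, j)) * v $ j)" for k
    using S i v
      by (simp add: of_real_hom.mat_hom_pow[OF S, symmetric] scalar_prod_def lessThan_atLeast0)
  moreover have "(?Sc ^\<^sub>m k *\<^sub>v v) $ i = l ^ k * v $ i" for k
    using eigenvector_pow[OF Sc evv, of k] i v by simp
  ultimately have "(\<lambda>k. l ^ k * v $ i) \<longlonglongrightarrow>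
      (\<Sum>j<N. complex_of_real (lim (\<lambda>k. (S ^\<^sub>m k) $$ (i, j))) * v $ j)"
    by (simp, intro tendsto_sum tendsto_mult_right tendsto_of_real entry) simp
  from tendsto_divide[OF this tendsto_const[of "v $ i"]] vi
  have "(\<lambda>k. l ^ k) \<longlonglongrightarrow> (\<Sum>j<N. complex_of_real (lim (\<lambda>k. (S ^\<^sub>m k) $$ (i, j))) * v $ j) / v $ i"
    by simp
  from power_convergent_imp_eq_1[OF this ge] l1 show False by simp
qed

lemma pseudo_spectral_radius_less_1_iff:
  assumes T: "T \<in> carrier_mat k k"
  shows "pseudo_spectral_radius T < 1 \<longleftrightarrow>
    (\<forall>l. eigenvalue (map_mat complex_of_real T) l \<and> l \<noteq> 1 \<longrightarrow> cmod l < 1)"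
proof -
  let ?A = "{cmod l | l. eigenvalue (map_mat complex_of_real T) l \<and> l \<noteq> 1}"
  have "?A \<subseteq> cmod ` spectrum (map_mat complex_of_real T)" unfolding spectrum_def by auto
  moreover have "finite (spectrum (map_mat complex_of_real T))"
    by (intro card_finite_spectrum(1)[of _ k]) (use T in simp)
  ultimately have "finite ?A" by (meson finite_imageI finite_subset)
  hence "finite (?A \<union> {0})" by simp
  hence "pseudo_spectral_radius T < 1 \<longleftrightarrow> (\<forall>a \<in> ?A \<union> {0}. a < 1)"
    unfolding pseudo_spectral_radius_def by (intro Max_less_iff) auto
  thus ?thesis by auto
qed

lemma spectral_radius_scaled_less_1:
  assumes A: "(A :: complex mat) \<in> carrier_mat N N" and N: "N > 0" and r: "spectral_radius A < r"
  shows "spectral_radius (complex_of_real (1 / r) \<cdot>\<^sub>m A) < 1"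
proof -
  let ?Ar = "complex_of_real (1 / r) \<cdot>\<^sub>m A"
  have Ar: "?Ar \<in> carrier_mat N N" using A by simp
  obtain l0 where "eigenvalue A l0" "spectral_radius A = norm l0"
    using spectral_radius_mem_max(1)[OF A N] unfolding spectrum_def by auto
  hence r0: "r > 0" using r norm_ge_zero[of l0] by linarith
  obtain mu where "eigenvalue ?Ar mu" and eq: "spectral_radius ?Ar = norm mu"
    using spectral_radius_mem_max(1)[OF Ar N] unfolding spectrum_def by auto
  then obtain v where v: "v \<in> carrier_vec N" "v \<noteq> 0\<^sub>v N" and Arv: "?Ar *\<^sub>v v = mu \<cdot>\<^sub>v v"
    unfolding eigenvalue_def eigenvector_def using Ar by auto
  have "A *\<^sub>v v = (complex_of_real r * mu) \<cdot>\<^sub>v v"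
  proof (rule eq_vecI)
    fix t assume "t < dim_vec ((complex_of_real r * mu) \<cdot>\<^sub>v v)"
    hence t: "t < N" using v by simp
    have "(?Ar *\<^sub>v v) $ t = complex_of_real (1 / r) * (A *\<^sub>v v) $ t"
      using A v t by (simp add: scalar_prod_def sum_distrib_left mult.assoc)
    thus "(A *\<^sub>v v) $ t = ((complex_of_real r * mu) \<cdot>\<^sub>v v) $ t"
      using Arv t v r0 by (simp add: field_simps)
  qed (use A v in simp)
  hence "eigenvalue A (complex_of_real r * mu)"
    unfolding eigenvalue_def eigenvector_def using v A by auto
  hence "norm (complex_of_real r * mu) \<le> spectral_radius A"
    by (intro spectral_radius_mem_max(2)[OF A N]) (auto simp: spectrum_def)
  hence "r * norm mu \<le> spectral_radius A" using r0 by (simp add: norm_mult)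
  hence "r * norm mu < r * 1" using r by linarith
  hence "norm mu < 1" using r0 by (simp only: mult_less_cancel_left_pos)
  thus ?thesis using eq by simp
qed

lemma mat_pow_entries_tendsto_0:
  fixes S :: "real mat"
  assumes S: "S \<in> carrier_mat N N"
    and ev: "\<And>l. eigenvalue (map_mat complex_of_real S) l \<Longrightarrow> norm l < 1"
    and i: "i < N" and j: "j < N"
  shows "(\<lambda>k. (S ^\<^sub>m k) $$ (i, j)) \<longlonglongrightarrow> 0"
proof -
  let ?Sc = "map_mat complex_of_real S"
  have Sc: "?Sc \<in> carrier_mat N N" using S by simp
  have N: "N > 0" using i by simp
  define \<rho> where "\<rho> = spectral_radius ?Sc"
  obtain l0 where "eigenvalue ?Sc l0" "\<rho> = norm l0"
    using spectral_radius_mem_max(1)[OF Sc N] unfolding \<rho>_def spectrum_def by auto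
  with ev have rho1: "\<rho> < 1" and rho0: "0 \<le> \<rho>" by auto
  define r where "r = (1 + \<rho>) / 2"
  have r0: "0 < r" and r1: "r < 1" and rr: "\<rho> < r" using rho1 rho0 unfolding r_def by auto
  (* Rescaled by 1/r, the matrix has bounded powers, so those of S decay like r^k. *)
  obtain c where c: "\<And>k. norm_bound ((complex_of_real (1 / r) \<cdot>\<^sub>m ?Sc) ^\<^sub>m k) c"
    using spectral_radius_jnf_norm_bound_less_1_upper_triangular[of _ N]
      spectral_radius_scaled_less_1[OF Sc N rr[unfolded \<rho>_def]] Sc by fastforce
  have bound: "norm ((S ^\<^sub>m k) $$ (i, j)) \<le> c * r ^ k" for k
  proof -
    have "(complex_of_real (1 / r) \<cdot>\<^sub>m ?Sc) ^\<^sub>m k =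
        complex_of_real (1 / r) ^ k \<cdot>\<^sub>m map_mat complex_of_real (S ^\<^sub>m k)"
      unfolding smult_pow_mat[OF Sc] of_real_hom.mat_hom_pow[OF S] ..
    moreover have "norm (((complex_of_real (1 / r) \<cdot>\<^sub>m ?Sc) ^\<^sub>m k) $$ (i, j)) \<le> c"
      using c[of k] i j Sc unfolding norm_bound_def by auto
    ultimately have "(1 / r) ^ k * norm ((S ^\<^sub>m k) $$ (i, j)) \<le> c"
      using r0 S i j by (simp add: norm_mult norm_power norm_divide)
    thus ?thesis using r0 by (simp add: field_simps power_one_over)
  qed
  have "(\<lambda>k. r ^ k) \<longlonglongrightarrow> 0" using r0 r1 by (intro LIMSEQ_power_zero) auto
  thus ?thesis by (rule tendsto_0_le[where K = c]) (use bound r0 in \<open>auto simp: mult.commute\<close>)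
qed

section \<open>Iterations with a singular splitting\<close>

locale singular_splitting =
  fixes N :: nat and M A :: "real mat"
  assumes M: "M \<in> carrier_mat N N" and A: "A \<in> carrier_mat N N"
    and kernel: "mat_kernel M \<subseteq> mat_kernel A"
begin

abbreviation "Mp \<equiv> moore_penrose M"

definition "Q = Mp * M"
definition "S = Mp * (M - A)"

lemma Mp: "Mp \<in> carrier_mat N N" "M * Mp * M = M" "Mp * M * Mp = Mp"
  using moore_penrose_conditions[OF M] by auto

lemma Q: "Q \<in> carrier_mat N N" "Q * Q = Q" "M * Q = M" "Q * Mp = Mp"
  unfolding Q_def using Mp M by (simp_all add: mult_assoc_dim)

lemma S: "S \<in> carrier_mat N N" "Q * S = S"
proof -
  show S: "S \<in> carrier_mat N N" unfolding S_def
    by (intro mult_carrier_mat[OF Mp(1)] minus_carrier_mat[OF A])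
  have "Q * S = Q * Mp * (M - A)"
    unfolding S_def using Mp(1) Q(1) minus_carrier_mat[OF A, of M]
      by (intro assoc_mult_mat[symmetric]) auto
  thus "Q * S = S" unfolding Q(4) S_def .
qed

lemma A_mult_complement:
  assumes e: "e \<in> carrier_vec N"
  shows "A *\<^sub>v (e - Q *\<^sub>v e) = 0\<^sub>v N"
proof -
  have "M *\<^sub>v (e - Q *\<^sub>v e) = M *\<^sub>v e - (M * Q) *\<^sub>v e"
    using M Q(1) e by (simp add: mult_minus_distrib_mat_vec mult_mat_vec_assoc_dim)
  hence "e - Q *\<^sub>v e \<in> mat_kernel M" using Q(3) M Q(1) e by (auto intro!: mat_kernelI)
  hence "e - Q *\<^sub>v e \<in> mat_kernel A" using kernel by blast
  thus ?thesis using A by (simp add: mat_kernel_def)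
qed

lemma S_mult_fixed:
  assumes z: "z \<in> carrier_vec N" and Qz: "Q *\<^sub>v z = z"
  shows "S *\<^sub>v z = z - Mp *\<^sub>v (A *\<^sub>v z)"
proof -
  have "S *\<^sub>v z = Mp *\<^sub>v (M *\<^sub>v z) - Mp *\<^sub>v (A *\<^sub>v z)"
    unfolding S_def using Mp(1) M A z
    by (simp add: mult_mat_vec_assoc_dim minus_mult_distrib_mat_vec mult_minus_distrib_mat_vec)
  also have "Mp *\<^sub>v (M *\<^sub>v z) = z" using Qz Mp(1) M z unfolding Q_def
    by (simp add: mult_mat_vec_assoc_dim)
  finally show ?thesis .
qed

lemma Q_fixes_S_pow:
  assumes e: "e \<in> carrier_vec N"
  shows "Q *\<^sub>v (S ^\<^sub>m k *\<^sub>v (Q *\<^sub>v e)) = S ^\<^sub>m k *\<^sub>v (Q *\<^sub>v e)"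
proof -
  have "Q * (S ^\<^sub>m k * Q) = S ^\<^sub>m k * Q"
  proof (cases k)
    case (Suc j)
    have "Q * (S ^\<^sub>m k * Q) = Q * S * (S ^\<^sub>m j * Q)"
      unfolding Suc pow_mat_Suc_left[OF S(1)] using Q(1) S(1) by (simp add: mult_assoc_dim)
    thus ?thesis unfolding Suc pow_mat_Suc_left[OF S(1)] S(2) using Q(1) S(1)
      by (simp add: mult_assoc_dim)
  qed (use Q S(1) in simp)
  thus ?thesis using Q(1) S(1) e by (simp flip: mult_mat_vec_assoc_dim)
qed

(* The error splits into a part in the kernel of A, which the iteration never changes, and a
   part in the range of Q, which it propagates by S. *)
lemma iter_seq_eq:
  assumes x0: "x0 \<in> carrier_vec N" and y: "y \<in> carrier_vec N" and b: "b = A *\<^sub>v y"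
  shows "iter_seq Mp A b x0 k = y + ((x0 - y) - Q *\<^sub>v (x0 - y)) + S ^\<^sub>m k *\<^sub>v (Q *\<^sub>v (x0 - y))"
proof (induction k)
  case 0
  show ?case using x0 y Q(1) S(1) by (auto intro!: eq_vecI)
next
  case (Suc k)
  define e where "e = x0 - y"
  define w where "w = e - Q *\<^sub>v e"
  define z where "z = S ^\<^sub>m k *\<^sub>v (Q *\<^sub>v e)"
  have e: "e \<in> carrier_vec N" unfolding e_def using x0 y by simp
  have w: "w \<in> carrier_vec N" unfolding w_def using e Q(1) by simp
  have z: "z \<in> carrier_vec N"
    unfolding z_def
      by (intro mult_mat_vec_carrier[OF pow_carrier_mat[OF S(1)] mult_mat_vec_carrier[OF Q(1) e]])
  have Aw: "A *\<^sub>v w = 0\<^sub>v N" unfolding w_def by (rule A_mult_complement[OF e])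
  have "b - A *\<^sub>v (y + w + z) = - (A *\<^sub>v z)"
    unfolding b using A y w z Aw by (auto intro!: eq_vecI simp: mult_add_distrib_mat_vec)
  moreover have "S ^\<^sub>m Suc k *\<^sub>v (Q *\<^sub>v e) = z - Mp *\<^sub>v (A *\<^sub>v z)"
  proof -
    have "S ^\<^sub>m Suc k *\<^sub>v (Q *\<^sub>v e) = S *\<^sub>v z"
      unfolding z_def pow_mat_Suc_left[OF S(1)] using S(1) Q(1) e
        by (simp add: mult_mat_vec_assoc_dim)
    also have "\<dots> = z - Mp *\<^sub>v (A *\<^sub>v z)"
      by (rule S_mult_fixed[OF z]) (unfold z_def, rule Q_fixes_S_pow[OF e])
    finally show ?thesis .
  qed
  moreover have "iter_seq Mp A b x0 k = y + w + z" using Suc unfolding w_def z_def e_def .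
  ultimately show ?case
    unfolding e_def[symmetric] w_def[symmetric] using y w z Mp(1) A
    by (auto intro!: eq_vecI simp: mult_mat_vec[symmetric])
qed

lemma iter_seq_index:
  assumes x0: "x0 \<in> carrier_vec N" and y: "y \<in> carrier_vec N" and b: "b = A *\<^sub>v y" and i: "i < N"
  shows "iter_seq Mp A b x0 k $ i =
    (y + ((x0 - y) - Q *\<^sub>v (x0 - y))) $ i + (S ^\<^sub>m k *\<^sub>v (Q *\<^sub>v (x0 - y))) $ i"
  unfolding iter_seq_eq[OF x0 y b] using x0 y Q(1) S(1) i by simp

lemma iteration_convergent_if_eigenvalues_less_1:
  assumes y: "y \<in> carrier_vec N" and b: "b = A *\<^sub>v y"
    and ev: "\<And>l. eigenvalue (map_mat complex_of_real S) l \<Longrightarrow> cmod l < 1"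
  shows "iteration_convergent N M A b"
  unfolding iteration_convergent_def
proof
  fix x0 :: "real vec" assume x0: "x0 \<in> carrier_vec N"
  define e where "e = x0 - y"
  define x where "x = y + (e - Q *\<^sub>v e)"
  have e: "e \<in> carrier_vec N" unfolding e_def using x0 y by simp
  have x: "x \<in> carrier_vec N" unfolding x_def using y e Q(1) by simp
  have "A *\<^sub>v x = A *\<^sub>v y + A *\<^sub>v (e - Q *\<^sub>v e)"
    unfolding x_def using A y e Q(1) by (simp add: mult_add_distrib_mat_vec)
  hence Ax: "A *\<^sub>v x = b" unfolding A_mult_complement[OF e] b using A y by simp
  have "(\<lambda>k. iter_seq Mp A b x0 k $ i) \<longlonglongrightarrow> x $ i" if i: "i < N" for i
  proof -
    have "(S ^\<^sub>m k *\<^sub>v (Q *\<^sub>v e)) $ i = (\<Sum>j<N. (S ^\<^sub>m k) $$ (i, j) * (Q *\<^sub>v e) $ j)" for k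
      using S(1) Q(1) e i by (simp add: scalar_prod_def lessThan_atLeast0)
    moreover have "(\<lambda>k. \<Sum>j<N. (S ^\<^sub>m k) $$ (i, j) * (Q *\<^sub>v e) $ j) \<longlonglongrightarrow> (\<Sum>j<N. 0 * (Q *\<^sub>v e) $ j)"
      by (intro tendsto_sum tendsto_mult_right mat_pow_entries_tendsto_0[OF S(1) ev i]) auto
    ultimately have "(\<lambda>k. (S ^\<^sub>m k *\<^sub>v (Q *\<^sub>v e)) $ i) \<longlonglongrightarrow> 0" by simp
    hence "(\<lambda>k. x $ i + (S ^\<^sub>m k *\<^sub>v (Q *\<^sub>v e)) $ i) \<longlonglongrightarrow> x $ i + 0"
      by (intro tendsto_add tendsto_const)
    thus ?thesis unfolding iter_seq_index[OF x0 y b i] x_def e_def by simp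
  qed
  thus "\<exists>x\<in>carrier_vec N. A *\<^sub>v x = b \<and> vec_tendsto N (iter_seq Mp A b x0) x"
    unfolding vec_tendsto_def using x Ax by blast
qed

lemma eigenvalues_less_1_if_iteration_convergent:
  assumes y: "y \<in> carrier_vec N" and b: "b = A *\<^sub>v y" and conv: "iteration_convergent N M A b"
    and ev: "eigenvalue (map_mat complex_of_real S) l" and l1: "l \<noteq> 1"
  shows "cmod l < 1"
proof (rule eigenvalue_norm_less_1_if_powers_converge[OF S(1) _ ev l1])
  have QS_conv: "convergent (\<lambda>k. (S ^\<^sub>m k *\<^sub>v (Q *\<^sub>v u)) $ i)"
    if u: "u \<in> carrier_vec N" and i: "i < N" for u i
  proof -
    have x0: "y + u \<in> carrier_vec N" and u_eq: "y + u - y = u" using y u by auto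
    obtain x where "vec_tendsto N (iter_seq Mp A b (y + u)) x"
      using conv x0 unfolding iteration_convergent_def by blast
    hence "(\<lambda>k. iter_seq Mp A b (y + u) k $ i) \<longlonglongrightarrow> x $ i" using i unfolding vec_tendsto_def by blast
    hence "(\<lambda>k. iter_seq Mp A b (y + u) k $ i - (y + (u - Q *\<^sub>v u)) $ i)
      \<longlonglongrightarrow> x $ i - (y + (u - Q *\<^sub>v u)) $ i" by (intro tendsto_diff tendsto_const)
    thus ?thesis unfolding iter_seq_index[OF x0 y b i] u_eq convergent_def by auto
  qed
  fix v :: "real vec" and i assume v: "v \<in> carrier_vec N" and i: "i < N"
  have QSv: "Q *\<^sub>v (S *\<^sub>v v) = S *\<^sub>v v"
    using S Q(1) v by (metis mult_mat_vec_assoc_dim carrier_matD carrier_vecD)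
  have "(S ^\<^sub>m Suc k *\<^sub>v v) $ i = (S ^\<^sub>m k *\<^sub>v (Q *\<^sub>v (S *\<^sub>v v))) $ i" for k
    unfolding QSv using S v by (simp add: mult_mat_vec_assoc_dim)
  hence "convergent (\<lambda>k. (S ^\<^sub>m Suc k *\<^sub>v v) $ i)" using QS_conv[of "S *\<^sub>v v" i] S(1) v i by simp
  thus "convergent (\<lambda>k. (S ^\<^sub>m k *\<^sub>v v) $ i)" by (rule convergent_Suc_iff[THEN iffD1])
qed

end

section \<open>Saddle point matrices\<close>

definition saddle_mat :: "real mat \<Rightarrow> real mat \<Rightarrow> real mat" where
  "saddle_mat H B = four_block_mat H (transpose_mat B) (- B) (0\<^sub>m (dim_row B) (dim_row B))"

lemma saddle_mat_eq:
  "B \<in> carrier_mat m n \<Longrightarrow> saddle_mat H B = four_block_mat H (transpose_mat B) (- B) (0\<^sub>m m m)"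
  unfolding saddle_mat_def by simp

lemma saddle_mat_carrier:
  "H \<in> carrier_mat n n \<Longrightarrow> B \<in> carrier_mat m n \<Longrightarrow> saddle_mat H B \<in> carrier_mat (n + m) (n + m)"
  unfolding saddle_mat_def by auto

lemma saddle_mat_mult_vec:
  assumes H: "H \<in> carrier_mat n n" and B: "B \<in> carrier_mat m n"
    and a: "a \<in> carrier_vec n" and d: "d \<in> carrier_vec m"
  shows "saddle_mat H B *\<^sub>v (a @\<^sub>v d) = (H *\<^sub>v a + transpose_mat B *\<^sub>v d) @\<^sub>v (- (B *\<^sub>v a))"
proof -
  have "0\<^sub>m m m *\<^sub>v d = 0\<^sub>v m" using d by (intro eq_vecI) auto
  thus ?thesis unfolding saddle_mat_eq[OF B]
    using four_block_mat_mult_vec[of H n n "transpose_mat B" m "- B" m "0\<^sub>m m m" a d] H B a d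
    by simp
qed

lemma saddle_mat_kernel:
  assumes H: "pos_def_mat n H" and B: "B \<in> carrier_mat m n" and z: "z \<in> mat_kernel (saddle_mat H B)"
  shows "vec_first z n = 0\<^sub>v n" "transpose_mat B *\<^sub>v vec_last z m = 0\<^sub>v n"
proof -
  have Hc: "H \<in> carrier_mat n n" by (rule pos_def_mat_carrier[OF H])
  define a where "a = vec_first z n"
  define d where "d = vec_last z m"
  have zc: "z \<in> carrier_vec (n + m)" using z saddle_mat_carrier[OF Hc B]
    by (simp add: mat_kernel_def)
  have a: "a \<in> carrier_vec n" and d: "d \<in> carrier_vec m" unfolding a_def d_def by auto
  have "(H *\<^sub>v a + transpose_mat B *\<^sub>v d) @\<^sub>v (- (B *\<^sub>v a)) = saddle_mat H B *\<^sub>v z"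
    using saddle_mat_mult_vec[OF Hc B a d] zc unfolding a_def d_def by simp
  also have "\<dots> = 0\<^sub>v n @\<^sub>v 0\<^sub>v m"
    using z saddle_mat_carrier[OF Hc B] by (auto simp: mat_kernel_def)
  finally have "(H *\<^sub>v a + transpose_mat B *\<^sub>v d) @\<^sub>v (- (B *\<^sub>v a)) = 0\<^sub>v n @\<^sub>v 0\<^sub>v m" .
  hence eq1: "H *\<^sub>v a + transpose_mat B *\<^sub>v d = 0\<^sub>v n" and eq2: "- (B *\<^sub>v a) = 0\<^sub>v m"
    using append_vec_eq[of "H *\<^sub>v a + transpose_mat B *\<^sub>v d" n "0\<^sub>v n"] Hc B a d by auto
  have Ba: "B *\<^sub>v a = 0\<^sub>v m" using arg_cong[OF eq2, of uminus] B a by simp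
  have "a \<bullet> (transpose_mat B *\<^sub>v d) = d \<bullet> (B *\<^sub>v a)"
    using transpose_vec_mult_scalar[OF B a d] comm_scalar_prod[of a n "transpose_mat B *\<^sub>v d"] B a d
    by simp
  hence "a \<bullet> (H *\<^sub>v a) = a \<bullet> (H *\<^sub>v a + transpose_mat B *\<^sub>v d)"
    using Ba a d Hc B by (simp add: scalar_prod_add_distrib[of _ n])
  hence "a \<bullet> (H *\<^sub>v a) = 0" using eq1 a by simp
  hence a0: "a = 0\<^sub>v n" using H a unfolding pos_def_mat_def by fastforce
  thus "vec_first z n = 0\<^sub>v n" unfolding a_def .
  show "transpose_mat B *\<^sub>v vec_last z m = 0\<^sub>v n"
    using eq1 a0 Hc B d unfolding d_def[symmetric] by (simp add: mult_mat_zero_vec)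
qed

lemma saddle_mat_kernel_subset:
  assumes P: "pos_def_mat n P" and W: "W \<in> carrier_mat n n" and B: "B \<in> carrier_mat m n"
  shows "mat_kernel (saddle_mat P B) \<subseteq> mat_kernel (saddle_mat W B)"
proof
  fix z assume z: "z \<in> mat_kernel (saddle_mat P B)"
  have Pc: "P \<in> carrier_mat n n" by (rule pos_def_mat_carrier[OF P])
  have zc: "z \<in> carrier_vec (n + m)" using z saddle_mat_carrier[OF Pc B]
    by (simp add: mat_kernel_def)
  define d where "d = vec_last z m"
  have d: "d \<in> carrier_vec m" unfolding d_def by simp
  have "z = vec_first z n @\<^sub>v d" unfolding d_def using zc by simp
  hence z_eq: "z = 0\<^sub>v n @\<^sub>v d" unfolding saddle_mat_kernel(1)[OF P B z] .
  have "saddle_mat W B *\<^sub>v z = (W *\<^sub>v 0\<^sub>v n + transpose_mat B *\<^sub>v d) @\<^sub>v (- (B *\<^sub>v 0\<^sub>v n))"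
    unfolding z_eq by (rule saddle_mat_mult_vec[OF W B _ d]) simp
  also have "\<dots> = 0\<^sub>v (n + m)"
    using saddle_mat_kernel(2)[OF P B z, folded d_def] W B by (auto simp: mult_mat_zero_vec)
  finally show "z \<in> mat_kernel (saddle_mat W B)"
    using zc saddle_mat_carrier[OF W B] by (auto intro: mat_kernelI)
qed

locale saddle_point =
  fixes n m :: nat and W P B :: "real mat"
  assumes W_pos_def: "pos_def_mat n W" and P_pos_def: "pos_def_mat n P" and B: "B \<in> carrier_mat m n"
begin

lemma W: "W \<in> carrier_mat n n" and P: "P \<in> carrier_mat n n"
  using W_pos_def P_pos_def by (simp_all add: pos_def_mat_carrier)

sublocale singular_splitting "n + m" "saddle_mat P B" "saddle_mat W B"
  using saddle_mat_carrier[OF P B] saddle_mat_carrier[OF W B]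
    saddle_mat_kernel_subset[OF P_pos_def W B]
  by unfold_locales

definition "Pinv = mat_inv n P"
definition "E = B * Pinv * transpose_mat B"
definition "X = Pinv - Pinv * transpose_mat B * moore_penrose E * B * Pinv"
definition "Y = moore_penrose E * B * Pinv"
definition "G = four_block_mat X (0\<^sub>m n 0) Y (0\<^sub>m m 0)"
definition F :: "real mat" where "F = mat (n + m) n (\<lambda>(i, j). of_bool (i = j))"

lemma Pinv: "Pinv \<in> carrier_mat n n" "P * Pinv = 1\<^sub>m n" "Pinv * P = 1\<^sub>m n"
  unfolding Pinv_def using mat_inv_inverse[OF P pos_def_mat_kernel[OF P_pos_def]] by auto

lemma P_Pinv_cancel: "dim_row Z = n \<Longrightarrow> P * (Pinv * Z) = Z"
  using P Pinv by (simp flip: mult_assoc_dim)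

lemma E: "E \<in> carrier_mat m m" unfolding E_def using B Pinv(1) by simp

lemma moore_penrose_E: "moore_penrose E \<in> carrier_mat m m" using moore_penrose_conditions(1)[OF E] .

lemma X: "X \<in> carrier_mat n n"
  unfolding X_def using Pinv(1) B moore_penrose_E by (intro minus_carrier_mat) auto

lemma Y: "Y \<in> carrier_mat m n" unfolding Y_def using Pinv(1) B moore_penrose_E by simp

lemma G: "G \<in> carrier_mat (n + m) n" unfolding G_def using X Y by auto

lemma F: "F \<in> carrier_mat (n + m) n" unfolding F_def by simp

lemma Ft: "transpose_mat F \<in> carrier_mat n (n + m)" using F by simp

lemma PW: "P - W \<in> carrier_mat n n" by (rule minus_carrier_mat[OF W])

lemma F_mult:
  assumes "Z \<in> carrier_mat n c"
  shows "F * Z = mat (n + m) c (\<lambda>(i, j). if i < n then Z $$ (i, j) else 0)"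
  using assms unfolding F_def by (auto simp: scalar_prod_def)

lemma mult_transpose_F:
  assumes "Z \<in> carrier_mat r n"
  shows "Z * transpose_mat F = mat r (n + m) (\<lambda>(i, j). if j < n then Z $$ (i, j) else 0)"
  using assms unfolding F_def by (auto simp: scalar_prod_def)

lemma transpose_F_mult:
  assumes "Z \<in> carrier_mat (n + m) c"
  shows "transpose_mat F * Z = mat n c (\<lambda>(i, j). Z $$ (i, j))"
  using assms unfolding F_def by (auto simp: scalar_prod_def)

lemma E_moore_penrose_E_B: "E * moore_penrose E * B = B"
proof (rule moore_penrose_range_absorb[OF E B])
  have "transpose_mat E = B * transpose_mat Pinv * transpose_mat B"
    unfolding E_def using B Pinv(1) by (simp add: transpose_mult_dim mult_assoc_dim)
  moreover have "pos_def_mat n (transpose_mat Pinv)"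
    unfolding Pinv_def by (intro pos_def_mat_transpose pos_def_mat_inv P_pos_def)
  ultimately show "mat_kernel (transpose_mat E) \<subseteq> mat_kernel (transpose_mat B)"
    using kernel_mult_pos_def_mult_transpose[OF _ B] by simp
qed

lemma P_X_plus_Bt_Y: "P * X + transpose_mat B * Y = 1\<^sub>m n"
proof -
  have "P * X = P * Pinv - P * (Pinv * transpose_mat B * moore_penrose E * B * Pinv)"
    unfolding X_def using P Pinv(1) B moore_penrose_E by (intro mult_minus_distrib_mat) auto
  also have "P * (Pinv * transpose_mat B * moore_penrose E * B * Pinv) = transpose_mat B * Y"
    unfolding Y_def using Pinv(1) B moore_penrose_E by (simp add: mult_assoc_dim P_Pinv_cancel)
  finally have "P * X = 1\<^sub>m n - transpose_mat B * Y" unfolding Pinv(2) .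
  thus ?thesis using B Y by (auto intro!: eq_matI)
qed

lemma B_X: "B * X = 0\<^sub>m m n"
proof -
  have "B * X = B * Pinv - B * (Pinv * transpose_mat B * moore_penrose E * B * Pinv)"
    unfolding X_def using B Pinv(1) moore_penrose_E by (intro mult_minus_distrib_mat) auto
  also have "B * (Pinv * transpose_mat B * moore_penrose E * B * Pinv) =
      B * Pinv * transpose_mat B * moore_penrose E * B * Pinv"
    using B Pinv(1) moore_penrose_E by (simp add: mult_assoc_dim)
  also have "\<dots> = E * moore_penrose E * B * Pinv" unfolding E_def by (rule refl)
  finally have "B * X = B * Pinv - E * moore_penrose E * B * Pinv" .
  thus ?thesis unfolding E_moore_penrose_E_B using B Pinv(1) by (auto intro!: eq_matI)
qed

lemma saddle_mult_G: "saddle_mat P B * G = F"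
proof -
  have "saddle_mat P B * G = four_block_mat (P * X + transpose_mat B * Y)
    (P * 0\<^sub>m n 0 + transpose_mat B * 0\<^sub>m m 0) (- B * X + 0\<^sub>m m m * Y) (- B * 0\<^sub>m n 0 + 0\<^sub>m m m * 0\<^sub>m m 0)"
    unfolding saddle_mat_eq[OF B] G_def by (rule mult_four_block_mat) (use P B X Y in auto)
  also have "- B * X + 0\<^sub>m m m * Y = 0\<^sub>m m n" using B_X B X Y by (auto intro!: eq_matI)
  finally show ?thesis unfolding P_X_plus_Bt_Y F_def using P B by (auto intro!: eq_matI)
qed

(* The columns of Y lie in the range of E^T, while E annihilates the last block of every
   vector in the kernel of the saddle point matrix. *)
lemma G_orthogonal_kernel:
  assumes j: "j < n" and z: "z \<in> mat_kernel (saddle_mat P B)"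
  shows "col G j \<bullet> z = 0"
proof -
  define d where "d = vec_last z m"
  have zc: "z \<in> carrier_vec (n + m)" using z saddle_mat_carrier[OF P B]
    by (simp add: mat_kernel_def)
  have d: "d \<in> carrier_vec m" unfolding d_def by simp
  have z_eq: "z = 0\<^sub>v n @\<^sub>v d"
    using zc saddle_mat_kernel(1)[OF P_pos_def B z] unfolding d_def by (metis vec_first_last_append)
  have Btd: "transpose_mat B *\<^sub>v d = 0\<^sub>v n" unfolding d_def
    by (rule saddle_mat_kernel(2)[OF P_pos_def B z])
  have colG: "col G j = col X j @\<^sub>v col Y j"
    unfolding G_def using X Y j by (intro col_four_block_mat(1)) auto
  define g where "g = transpose_mat (moore_penrose E) *\<^sub>v (moore_penrose E *\<^sub>v col (B * Pinv) j)"
  have g: "g \<in> carrier_vec m" unfolding g_def using moore_penrose_E B Pinv(1) j by simp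
  have "Y = moore_penrose E * (B * Pinv)" unfolding Y_def using moore_penrose_E B Pinv(1)
    by (simp add: mult_assoc_dim)
  hence "col Y j = moore_penrose E *\<^sub>v col (B * Pinv) j"
    by (simp only: col_mult2[OF moore_penrose_E mult_carrier_mat[OF B Pinv(1)] j])
  also have "\<dots> = transpose_mat E *\<^sub>v g"
    unfolding g_def using E moore_penrose_E B Pinv(1)
    by (subst moore_penrose_in_range_transpose[OF E]) (simp add: mult_mat_vec_assoc_dim)
  finally have "col Y j \<bullet> d = g \<bullet> (E *\<^sub>v d)" using transpose_vec_mult_scalar[OF E d g] by simp
  also have "E *\<^sub>v d = 0\<^sub>v m"
    unfolding E_def using B Pinv(1) d Btd by (simp add: mult_mat_vec_assoc_dim mult_mat_zero_vec)
  finally have "col Y j \<bullet> d = 0" using g by simp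
  thus ?thesis unfolding colG z_eq using X Y d j by (simp add: scalar_prod_append[of _ n _ m])
qed

lemma moore_penrose_mult_F: "Mp * F = G"
proof (rule mat_col_eqI)
  fix j assume "j < dim_col G"
  hence j: "j < n" using G by simp
  have colG: "col G j \<in> carrier_vec (n + m)" using G j by simp
  have "col (Mp * F) j = Mp *\<^sub>v col F j" by (rule col_mult2[OF Mp(1) F j])
  also have "col F j = saddle_mat P B *\<^sub>v col G j"
    unfolding saddle_mult_G[symmetric] by (rule col_mult2[OF saddle_mat_carrier[OF P B] G j])
  also have "Mp *\<^sub>v (saddle_mat P B *\<^sub>v col G j) = col G j"
    using moore_penrose_fixes_kernel_orthogonal[OF saddle_mat_carrier[OF P B] colG
        G_orthogonal_kernel[OF j]]
      Mp(1) saddle_mat_carrier[OF P B] colG by (simp add: mult_mat_vec_assoc_dim)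
  finally show "col (Mp * F) j = col G j" .
qed (use Mp(1) F G in auto)

lemma saddle_mat_diff: "saddle_mat P B - saddle_mat W B = F * ((P - W) * transpose_mat F)"
proof -
  have PWFt: "(P - W) * transpose_mat F \<in> carrier_mat n (n + m)" using PW F by simp
  show ?thesis unfolding F_mult[OF PWFt] unfolding mult_transpose_F[OF PW] saddle_mat_eq[OF B]
    using P W B by (auto intro!: eq_matI)
qed

lemma S_eq: "S = G * (P - W) * transpose_mat F"
proof -
  have "S = Mp * F * ((P - W) * transpose_mat F)"
    unfolding S_def saddle_mat_diff using Mp(1) F PW W by (simp add: mult_assoc_dim)
  thus ?thesis unfolding moore_penrose_mult_F using G F PW W by (simp add: mult_assoc_dim)
qed

lemma transpose_F_mult_G: "transpose_mat F * G = X"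
proof -
  have "transpose_mat F * G = mat n n (\<lambda>(i, j). G $$ (i, j))" by (rule transpose_F_mult[OF G])
  also have "\<dots> = X" unfolding G_def using X Y by (auto intro!: eq_matI)
  finally show ?thesis .
qed

lemma eigenvalue_S_iff:
  assumes l: "l \<noteq> 0"
  shows "eigenvalue (map_mat complex_of_real S) l \<longleftrightarrow>
    eigenvalue (map_mat complex_of_real (X * (P - W))) l"
proof -
  let ?U = "map_mat complex_of_real (G * (P - W))"
    and ?V = "map_mat complex_of_real (transpose_mat F)"
  have GPW: "G * (P - W) \<in> carrier_mat (n + m) n" using G PW by simp
  hence U: "?U \<in> carrier_mat (n + m) n" and V: "?V \<in> carrier_mat n (n + m)" using Ft by auto
  have "map_mat complex_of_real S = ?U * ?V"
    unfolding S_eq by (rule of_real_hom.mat_hom_mult[OF GPW Ft])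
  moreover have "X * (P - W) = transpose_mat F * (G * (P - W))"
    unfolding transpose_F_mult_G[symmetric] by (rule assoc_mult_mat[OF Ft G PW])
  hence "map_mat complex_of_real (X * (P - W)) = ?V * ?U"
    using of_real_hom.mat_hom_mult[OF Ft GPW] by simp
  ultimately show ?thesis using eigenvalue_mult_swap[OF U V l] eigenvalue_mult_swap[OF V U l]
    by auto
qed

lemma X_mult_fixed_point_eq_0:
  assumes u: "u \<in> carrier_vec n" and fix_u: "(X * (P - W)) *\<^sub>v u = u"
  shows "u = 0\<^sub>v n"
proof -
  define f where "f = (P - W) *\<^sub>v u"
  have f: "f \<in> carrier_vec n" unfolding f_def using PW u by simp
  have Xf: "X *\<^sub>v f = u" using fix_u unfolding f_def using X PW W u
    by (simp add: mult_mat_vec_assoc_dim)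
  have "B *\<^sub>v u = (B * X) *\<^sub>v f" unfolding Xf[symmetric] using B X f
    by (simp add: mult_mat_vec_assoc_dim)
  hence Bu: "B *\<^sub>v u = 0\<^sub>v m" unfolding B_X using f by (auto intro!: eq_vecI)
  define y where "y = Y *\<^sub>v f"
  have y: "y \<in> carrier_vec m" unfolding y_def using Y f by simp
  have "P *\<^sub>v u + transpose_mat B *\<^sub>v y = (P * X + transpose_mat B * Y) *\<^sub>v f"
    unfolding Xf[symmetric] y_def using P X B Y f
    by (simp add: add_mult_distrib_mat_vec[of _ n n] mult_mat_vec_assoc_dim)
  also have "\<dots> = P *\<^sub>v u - W *\<^sub>v u" unfolding P_X_plus_Bt_Y f_def using P W u
    by (simp add: minus_mult_distrib_mat_vec)
  finally have eq: "P *\<^sub>v u + transpose_mat B *\<^sub>v y = P *\<^sub>v u - W *\<^sub>v u" .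
  have "W *\<^sub>v u + transpose_mat B *\<^sub>v y = 0\<^sub>v n"
  proof (rule eq_vecI)
    fix i assume "i < dim_vec (0\<^sub>v n)"
    hence i: "i < n" by simp
    have "(P *\<^sub>v u + transpose_mat B *\<^sub>v y) $ i = (P *\<^sub>v u - W *\<^sub>v u) $ i" using eq by simp
    thus "(W *\<^sub>v u + transpose_mat B *\<^sub>v y) $ i = 0\<^sub>v n $ i" using i P W B u y by simp
  qed (use W B u in simp)
  hence "0 = u \<bullet> (W *\<^sub>v u + transpose_mat B *\<^sub>v y)" using u by simp
  also have "\<dots> = u \<bullet> (W *\<^sub>v u) + y \<bullet> (B *\<^sub>v u)"
    using transpose_vec_mult_scalar[OF B u y] comm_scalar_prod[of u n "transpose_mat B *\<^sub>v y"]
      u y W B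
    by (simp add: scalar_prod_add_distrib[of _ n])
  finally have "u \<bullet> (W *\<^sub>v u) = 0" using Bu y by simp
  thus ?thesis using W_pos_def u unfolding pos_def_mat_def by fastforce
qed

lemma X_mult_not_eigenvalue_1: "\<not> eigenvalue (map_mat complex_of_real (X * (P - W))) 1"
proof
  have K: "X * (P - W) \<in> carrier_mat n n" using X PW by simp
  assume "eigenvalue (map_mat complex_of_real (X * (P - W))) 1"
  hence "eigenvalue (X * (P - W)) 1" using of_real_hom.eigenvalue_hom_iff[OF K, of 1]
    by (metis of_real_1)
  then obtain u where "u \<in> carrier_vec n" "u \<noteq> 0\<^sub>v n" "(X * (P - W)) *\<^sub>v u = u"
    using K unfolding eigenvalue_def eigenvector_def by auto
  thus False using X_mult_fixed_point_eq_0 by blast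
qed

lemma iteration_convergent_iff:
  assumes y: "y \<in> carrier_vec (n + m)" and b: "b = saddle_mat W B *\<^sub>v y"
  shows "iteration_convergent (n + m) (saddle_mat P B) (saddle_mat W B) b \<longleftrightarrow>
    (\<forall>l. eigenvalue (map_mat complex_of_real (X * (P - W))) l \<and> l \<noteq> 1 \<longrightarrow> cmod l < 1)"
proof
  assume conv: "iteration_convergent (n + m) (saddle_mat P B) (saddle_mat W B) b"
  show "\<forall>l. eigenvalue (map_mat complex_of_real (X * (P - W))) l \<and> l \<noteq> 1 \<longrightarrow> cmod l < 1"
  proof (intro allI impI)
    fix l assume "eigenvalue (map_mat complex_of_real (X * (P - W))) l \<and> l \<noteq> 1"
    thus "cmod l < 1"
      using eigenvalues_less_1_if_iteration_convergent[OF y b conv] eigenvalue_S_iff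
      by (cases "l = 0") auto
  qed
next
  assume K: "\<forall>l. eigenvalue (map_mat complex_of_real (X * (P - W))) l \<and> l \<noteq> 1 \<longrightarrow> cmod l < 1"
  show "iteration_convergent (n + m) (saddle_mat P B) (saddle_mat W B) b"
  proof (rule iteration_convergent_if_eigenvalues_less_1[OF y b])
    fix l assume "eigenvalue (map_mat complex_of_real S) l"
    thus "cmod l < 1" using K eigenvalue_S_iff X_mult_not_eigenvalue_1 by (cases "l = 0") auto
  qed
qed

end

theorem theorem1:
  fixes n m :: nat and W P B :: "real mat" and b :: "real vec"
  assumes W: "pos_def_mat n W"
    and P: "pos_def_mat n P"
    and B: "B \<in> carrier_mat m n"
    and rank: "mat_rank B < m" and mn: "m \<le> n"
    and b_range: "\<exists>y \<in> carrier_vec (n + m).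
       b = four_block_mat W (transpose_mat B) (- B) (0\<^sub>m m m) *\<^sub>v y"
  shows "iteration_convergent (n + m)
           (four_block_mat P (transpose_mat B) (- B) (0\<^sub>m m m))
           (four_block_mat W (transpose_mat B) (- B) (0\<^sub>m m m)) b
         \<longleftrightarrow>
         pseudo_spectral_radius
           ((mat_inv n P - mat_inv n P * transpose_mat B
               * moore_penrose (B * mat_inv n P * transpose_mat B) * B * mat_inv n P)
            * (P - W)) < 1"
proof -
  interpret saddle_point n m W P B by unfold_locales (fact W P B)+
  obtain y where y: "y \<in> carrier_vec (n + m)" and b: "b = saddle_mat W B *\<^sub>v y"
    using b_range unfolding saddle_mat_eq[OF B] by blast
  have "(mat_inv n P - mat_inv n P * transpose_mat B
      * moore_penrose (B * mat_inv n P * transpose_mat B) * B * mat_inv n P) * (P - W)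
      = X * (P - W)"
    unfolding X_def E_def Pinv_def ..
  moreover have "X * (P - W) \<in> carrier_mat n n" using X PW by simp
  ultimately show ?thesis
    unfolding saddle_mat_eq[OF B, symmetric] iteration_convergent_iff[OF y b]
    by (simp add: pseudo_spectral_radius_less_1_iff)
qed

end
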